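(* In the setting below, suppose that $x\mapsto f(x)+g(Ax)$ is bounded below and $\{x: x\in\operatorname{ri}(\operatorname{dom}f),\ Ax\in\operatorname{ri}(\operatorname{dom}g),\ Bx=b\}\ne\emptyset$ ("$\operatorname{ri}$" omitted for polyhedral $f$ or $g$). Let $w^*=[y^*;z^*]$ be a local minimizer of $\Xi(w)+\Psi_{0,\mu}(z)$ (for some $\mu>0$), let $T_*=\{i:z^*_i\ne0\}$, $\bar T_*=[r]\setminus T_*$, let $$\Omega_0:=\operatorname{argmin}_{w=[y;z]}\{\Xi(w):\ z_{\bar T_*}=0\},$$ and assume $w^*\in\operatorname{argmin}\{\|z\|_0:\ w=[y;z]\in\Omega_0\}$. Define $\xi_0:=\min_w\{\Xi(w): z_{\bar T_*}=0\}$, $\xi_1:=\min_{S\subsetneq T_*}\min_w\{\Xi(w): z_{\bar S}=0\}$, $\xi_2:=\min_{S\not\subseteq T_*}\min_w\{\Xi(w): z_{\bar S}=0\}$ (a minimum over an empty family of index sets being $+\infty$). If $\mu'\in\mathbb R^r$, $\mu'>0$, satisfies $\sum_{i\in T_*}\mu'_i\le\xi_1-\xi_0$ and $\mu'_j>\max\{\xi_1-\xi_2,0\}$ for all $j\in\bar T_*$, then $w^*$ is a global minimizer of $\Xi(w)+\Psi_{0,\mu'}(z)$.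
   Context: Let $f:\mathbb R^n\to(-\infty,\infty]$, $g:\mathbb R^m\to(-\infty,\infty]$ be proper, lsc and convex with conjugates $f^*,g^*$; $A\in\mathbb R^{m\times n}$, $B\in\mathbb R^{r\times n}$, $b\in\mathbb R^r$. For $w=[y;z]\in\mathbb R^m\times\mathbb R^r$, $\Xi(w)=f^*(-A^\top y-B^\top z)+g^*(y)+\langle b,z\rangle$; $\Psi_{0,\mu}(z)=\sum_{i=1}^r\mu_i\mathbf 1_{\{z_i\ne0\}}$. $\|z\|_0$ is the number of nonzero entries of $z$; $[r]=\{1,\dots,r\}$, $\bar S=[r]\setminus S$, $z_S$ the subvector indexed by $S$. $\operatorname{ri}$ denotes relative interior. *)

theory Defs
  imports "HOL-Analysis.Analysis" "HOL-Library.Extended_Real"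
begin

definition edom :: "('a \<Rightarrow> ereal) \<Rightarrow> 'a set" where
  "edom f = {x. f x < \<infinity>}"

definition epigraph :: "('a \<Rightarrow> ereal) \<Rightarrow> ('a \<times> real) set" where
  "epigraph f = {(x, t). f x \<le> ereal t}"

definition proper_fun :: "('a \<Rightarrow> ereal) \<Rightarrow> bool" where
  "proper_fun f \<longleftrightarrow> (\<forall>x. f x \<noteq> -\<infinity>) \<and> (\<exists>x. f x < \<infinity>)"

definition lsc_fun :: "('a::topological_space \<Rightarrow> ereal) \<Rightarrow> bool" where
  "lsc_fun f \<longleftrightarrow> (\<forall>x. f x \<le> Liminf (at x) f)"

definition convex_fun :: "('a::real_vector \<Rightarrow> ereal) \<Rightarrow> bool" where
  "convex_fun f \<longleftrightarrow> convex (epigraph f)"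

definition polyhedral_fun :: "('a::euclidean_space \<Rightarrow> ereal) \<Rightarrow> bool" where
  "polyhedral_fun f \<longleftrightarrow> polyhedron (epigraph f)"

definition conj_fun :: "('a::real_inner \<Rightarrow> ereal) \<Rightarrow> 'a \<Rightarrow> ereal" where
  "conj_fun f u = (SUP x. ereal (u \<bullet> x) - f x)"

definition Xi :: "(real^'n \<Rightarrow> ereal) \<Rightarrow> (real^'m \<Rightarrow> ereal) \<Rightarrow> real^'n^'m \<Rightarrow> real^'n^'r
     \<Rightarrow> real^'r \<Rightarrow> (real^'m) \<times> (real^'r) \<Rightarrow> ereal" where
  "Xi f g A B b w = conj_fun f (- (transpose A *v fst w) - (transpose B *v snd w))
                    + conj_fun g (fst w) + ereal (b \<bullet> snd w)"

definition Psi0 :: "real^'r \<Rightarrow> real^'r \<Rightarrow> real" where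
  "Psi0 \<mu> z = (\<Sum>i\<in>UNIV. if z $ i \<noteq> 0 then \<mu> $ i else 0)"

definition l0norm :: "real^'r \<Rightarrow> nat" where
  "l0norm z = card {i. z $ i \<noteq> 0}"

definition supp :: "real^'r \<Rightarrow> 'r set" where
  "supp z = {i. z $ i \<noteq> 0}"

definition restricted_inf :: "((real^'m) \<times> (real^'r) \<Rightarrow> ereal) \<Rightarrow> 'r set \<Rightarrow> ereal" where
  "restricted_inf F S = (INF w \<in> {w. \<forall>i. i \<notin> S \<longrightarrow> snd w $ i = 0}. F w)"

definition local_minimizer :: "('a::metric_space \<Rightarrow> ereal) \<Rightarrow> 'a \<Rightarrow> bool" where
  "local_minimizer F x \<longleftrightarrow> (\<exists>e>0. \<forall>y. dist y x < e \<longrightarrow> F x \<le> F y)"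

definition global_minimizer :: "('a \<Rightarrow> ereal) \<Rightarrow> 'a \<Rightarrow> bool" where
  "global_minimizer F x \<longleftrightarrow> (\<forall>y. F x \<le> F y)"

definition argmin_on :: "('a \<Rightarrow> 'b::linorder) \<Rightarrow> 'a set \<Rightarrow> 'a set" where
  "argmin_on F C = {x \<in> C. \<forall>y\<in>C. F x \<le> F y}"

end

theory Submission
  imports Defs
begin

text \<open>
  Write \<open>T\<close> for the support of \<open>z\<^sup>*\<close> and split an arbitrary \<open>w = [y;z]\<close> according to the
  support \<open>S\<close> of \<open>z\<close>. If \<open>S = T\<close>, then \<open>w\<close> is feasible for \<open>\<Omega>\<^sub>0\<close>, so \<open>\<Xi>(w) \<ge> \<Xi>(w\<^sup>*)\<close> and the
  penalties agree. If \<open>S \<subset> T\<close>, then \<open>\<Xi>(w) \<ge> \<xi>\<^sub>1 \<ge> \<xi>\<^sub>0 + (\<Sum>i\<in>T. \<mu>'\<^sub>i)\<close>, which is the objective at \<open>w\<^sup>*\<close>.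
  If \<open>\<not> S \<subseteq> T\<close>, then \<open>S\<close> contains some \<open>j \<notin> T\<close>, and \<open>\<Xi>(w) + \<mu>'\<^sub>j \<ge> \<xi>\<^sub>2 + \<mu>'\<^sub>j > \<xi>\<^sub>1\<close>.
\<close>

lemma Psi0_eq_sum_supp: "Psi0 \<mu> z = (\<Sum>i\<in>supp z. \<mu> $ i)"
  unfolding Psi0_def supp_def by (simp add: sum.If_cases)

lemma Psi0_nonneg:
  assumes "\<forall>i. 0 \<le> \<mu> $ i"
  shows "0 \<le> Psi0 \<mu> z"
  unfolding Psi0_def using assms by (intro sum_nonneg) auto

lemma Psi0_ge_component:
  assumes "\<forall>i. 0 \<le> \<mu> $ i" and "j \<in> supp z"
  shows "\<mu> $ j \<le> Psi0 \<mu> z"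
  unfolding Psi0_eq_sum_supp using assms by (intro member_le_sum) auto

lemma restricted_inf_le:
  assumes "\<forall>i. i \<notin> S \<longrightarrow> snd w $ i = 0"
  shows "restricted_inf F S \<le> F w"
  unfolding restricted_inf_def by (rule INF_lower) (use assms in auto)

lemma restricted_inf_supp_le: "restricted_inf F (supp (snd w)) \<le> F w"
  by (rule restricted_inf_le) (simp add: supp_def)

lemma restricted_inf_antimono:
  assumes "S \<subseteq> T"
  shows "restricted_inf F T \<le> restricted_inf F S"
  unfolding restricted_inf_def using assms by (intro INF_superset_mono) auto

lemma restricted_inf_eq_argmin:
  assumes "w \<in> argmin_on F {w. \<forall>i. i \<notin> S \<longrightarrow> snd w $ i = 0}"
  shows "restricted_inf F S = F w"
proof (rule antisym)
  show "restricted_inf F S \<le> F w"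
    using assms by (intro restricted_inf_le) (simp add: argmin_on_def)
  show "F w \<le> restricted_inf F S"
    using assms unfolding restricted_inf_def argmin_on_def by (auto intro: INF_greatest)
qed

lemma ereal_add_le_if_le_diff:
  fixes a b :: ereal
  assumes "ereal s \<le> b - a" and "a \<le> b"
  shows "a + ereal s \<le> b"
  using assms by (cases a; cases b) auto

lemma ereal_le_add_if_diff_less:
  fixes a b :: ereal
  assumes "b - a < ereal m" and "a \<noteq> \<infinity>"
  shows "b \<le> a + ereal m"
  using assms by (cases a; cases b) auto

lemma penalized_ge_INF_proper_subsets:
  assumes "\<forall>i. 0 \<le> \<mu> $ i" and "supp (snd w) \<subset> T"
  shows "(INF S \<in> {S. S \<subset> T}. restricted_inf F S) \<le> F w + ereal (Psi0 \<mu> (snd w))"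
proof -
  have "(INF S \<in> {S. S \<subset> T}. restricted_inf F S) \<le> restricted_inf F (supp (snd w))"
    using assms(2) by (intro INF_lower) simp
  also have "\<dots> \<le> F w"
    by (rule restricted_inf_supp_le)
  also have "\<dots> \<le> F w + ereal (Psi0 \<mu> (snd w))"
    using Psi0_nonneg[OF assms(1)] by (simp add: ereal_le_add_self)
  finally show ?thesis .
qed

lemma penalized_ge_INF_proper_subsets_if_not_subset:
  fixes F :: "(real^'m) \<times> (real^'r) \<Rightarrow> ereal" and T :: "'r set"
  defines "\<xi>\<^sub>1 \<equiv> INF S \<in> {S. S \<subset> T}. restricted_inf F S"
    and "\<xi>\<^sub>2 \<equiv> INF S \<in> {S. \<not> S \<subseteq> T}. restricted_inf F S"
  assumes "\<forall>i. 0 \<le> \<mu> $ i" and "j \<in> supp (snd w)" and "j \<notin> T"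
    and "\<xi>\<^sub>2 \<noteq> \<infinity> \<Longrightarrow> \<xi>\<^sub>1 - \<xi>\<^sub>2 < ereal (\<mu> $ j)"
  shows "\<xi>\<^sub>1 \<le> F w + ereal (Psi0 \<mu> (snd w))"
proof -
  have "\<xi>\<^sub>2 \<le> restricted_inf F (supp (snd w))"
    unfolding \<xi>\<^sub>2_def using assms(4,5) by (intro INF_lower) auto
  also have "\<dots> \<le> F w"
    by (rule restricted_inf_supp_le)
  finally have \<xi>\<^sub>2_le: "\<xi>\<^sub>2 \<le> F w" .
  show ?thesis
  proof (cases "\<xi>\<^sub>2 = \<infinity>")
    case True
    with \<xi>\<^sub>2_le show ?thesis by simp
  next
    case False
    then have "\<xi>\<^sub>1 \<le> \<xi>\<^sub>2 + ereal (\<mu> $ j)"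
      using assms(6) by (intro ereal_le_add_if_diff_less)
    also have "\<dots> \<le> F w + ereal (Psi0 \<mu> (snd w))"
      using \<xi>\<^sub>2_le Psi0_ge_component[OF assms(3,4)] by (intro add_mono) auto
    finally show ?thesis .
  qed
qed

theorem global_minimizer_penalized_if_thresholds:
  fixes F :: "(real^'m) \<times> (real^'r) \<Rightarrow> ereal" and ystar :: "real^'m" and zstar :: "real^'r"
  defines "T \<equiv> supp zstar"
  defines "\<xi>\<^sub>0 \<equiv> restricted_inf F T"
    and "\<xi>\<^sub>1 \<equiv> INF S \<in> {S. S \<subset> T}. restricted_inf F S"
    and "\<xi>\<^sub>2 \<equiv> INF S \<in> {S. \<not> S \<subseteq> T}. restricted_inf F S"
  assumes argmin: "(ystar, zstar) \<in> argmin_on F {w. \<forall>i. i \<notin> T \<longrightarrow> snd w $ i = 0}"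
    and \<mu>_nonneg: "\<forall>i. 0 \<le> \<mu> $ i"
    and threshold_inside: "ereal (\<Sum>i\<in>T. \<mu> $ i) \<le> \<xi>\<^sub>1 - \<xi>\<^sub>0"
    and threshold_outside: "\<And>j. j \<notin> T \<Longrightarrow> \<xi>\<^sub>2 \<noteq> \<infinity> \<Longrightarrow> \<xi>\<^sub>1 - \<xi>\<^sub>2 < ereal (\<mu> $ j)"
  shows "global_minimizer (\<lambda>w. F w + ereal (Psi0 \<mu> (snd w))) (ystar, zstar)"
  unfolding global_minimizer_def
proof
  fix w :: "(real^'m) \<times> (real^'r)"
  have \<xi>\<^sub>0_eq: "\<xi>\<^sub>0 = F (ystar, zstar)"
    unfolding \<xi>\<^sub>0_def using argmin by (rule restricted_inf_eq_argmin)
  have "\<xi>\<^sub>0 \<le> \<xi>\<^sub>1"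
    unfolding \<xi>\<^sub>0_def \<xi>\<^sub>1_def by (intro INF_greatest restricted_inf_antimono) auto
  then have star_le_\<xi>\<^sub>1: "F (ystar, zstar) + ereal (Psi0 \<mu> zstar) \<le> \<xi>\<^sub>1"
    using threshold_inside ereal_add_le_if_le_diff
    by (simp add: \<xi>\<^sub>0_eq Psi0_eq_sum_supp T_def)
  consider "supp (snd w) = T" | "supp (snd w) \<subset> T" | j where "j \<in> supp (snd w)" "j \<notin> T"
    by blast
  then show "F (ystar, zstar) + ereal (Psi0 \<mu> (snd (ystar, zstar)))
      \<le> F w + ereal (Psi0 \<mu> (snd w))"
  proof cases
    case 1
    then have "\<forall>i. i \<notin> T \<longrightarrow> snd w $ i = 0"
      by (auto simp: supp_def)
    then have "F (ystar, zstar) \<le> F w"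
      using argmin unfolding argmin_on_def by blast
    with 1 show ?thesis
      by (simp add: Psi0_eq_sum_supp T_def add_right_mono)
  next
    case 2
    then have "\<xi>\<^sub>1 \<le> F w + ereal (Psi0 \<mu> (snd w))"
      unfolding \<xi>\<^sub>1_def by (rule penalized_ge_INF_proper_subsets[OF \<mu>_nonneg])
    with star_le_\<xi>\<^sub>1 show ?thesis
      by simp
  next
    case 3
    have "\<xi>\<^sub>2 \<noteq> \<infinity> \<Longrightarrow> \<xi>\<^sub>1 - \<xi>\<^sub>2 < ereal (\<mu> $ j)"
      using threshold_outside 3(2) .
    then have "\<xi>\<^sub>1 \<le> F w + ereal (Psi0 \<mu> (snd w))"
      using penalized_ge_INF_proper_subsets_if_not_subset[OF \<mu>_nonneg 3, of F, folded \<xi>\<^sub>1_def \<xi>\<^sub>2_def]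
      by blast
    with star_le_\<xi>\<^sub>1 show ?thesis
      by simp
  qed
qed

theorem mainTheorem19:
  fixes f :: "real^'n \<Rightarrow> ereal" and g :: "real^'m \<Rightarrow> ereal"
    and A :: "real^'n^'m" and B :: "real^'n^'r" and b :: "real^'r"
    and \<mu> \<mu>' :: "real^'r" and ystar :: "real^'m" and zstar :: "real^'r"
  assumes f_pr: "proper_fun f" and f_lsc: "lsc_fun f" and f_cvx: "convex_fun f"
    and g_pr: "proper_fun g" and g_lsc: "lsc_fun g" and g_cvx: "convex_fun g"
    and bdd: "\<exists>c::real. \<forall>x. ereal c \<le> f x + g (A *v x)"
    and CQ: "\<exists>x. (x \<in> rel_interior (edom f) \<or> (polyhedral_fun f \<and> x \<in> edom f))
                \<and> (A *v x \<in> rel_interior (edom g) \<or> (polyhedral_fun g \<and> A *v x \<in> edom g))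
                \<and> B *v x = b"
    and mu_pos: "\<forall>i. \<mu> $ i > 0"
    and locmin: "local_minimizer (\<lambda>w. Xi f g A B b w + ereal (Psi0 \<mu> (snd w))) (ystar, zstar)"
    and l0min: "(ystar, zstar) \<in> argmin_on (\<lambda>w. l0norm (snd w))
                  (argmin_on (Xi f g A B b) {w. \<forall>i. i \<notin> supp zstar \<longrightarrow> snd w $ i = 0})"
    and mu'_pos: "\<forall>i. \<mu>' $ i > 0"
    and h1: "ereal (\<Sum>i\<in>supp zstar. \<mu>' $ i) \<le>
               (INF S \<in> {S. S \<subset> supp zstar}. restricted_inf (Xi f g A B b) S)
               - restricted_inf (Xi f g A B b) (supp zstar)"
    and h2: "\<forall>j. j \<notin> supp zstar \<longrightarrow>
               ((INF S \<in> {S. \<not> S \<subseteq> supp zstar}. restricted_inf (Xi f g A B b) S) \<noteq> \<infinity>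
                 \<longrightarrow> (INF S \<in> {S. S \<subset> supp zstar}. restricted_inf (Xi f g A B b) S)
                     - (INF S \<in> {S. \<not> S \<subseteq> supp zstar}. restricted_inf (Xi f g A B b) S)
                     < ereal (\<mu>' $ j))"
  shows "global_minimizer (\<lambda>w. Xi f g A B b w + ereal (Psi0 \<mu>' (snd w))) (ystar, zstar)"
proof (rule global_minimizer_penalized_if_thresholds)
  show "(ystar, zstar) \<in> argmin_on (Xi f g A B b) {w. \<forall>i. i \<notin> supp zstar \<longrightarrow> snd w $ i = 0}"
    using l0min by (simp add: argmin_on_def)
  show "\<forall>i. 0 \<le> \<mu>' $ i"
    using mu'_pos by (simp add: less_imp_le)
qed (use h1 h2 in auto)

end
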